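(* Let $\mathbf A\in\mathbb R^{m\times n}$, let $k\ge 1$ be an integer, and let $\alpha>0$ and $c>0$ be fixed. The following are equivalent: (i) for every $k$-sparse vector $\mathbf x^0\in\mathbb R^n$ with $\|\mathbf x^0\|_\infty=c$, the vector $\mathbf x^0$ is the unique minimizer of problem (P2) with $\mathbf b=\mathbf A\mathbf x^0$; (ii) for every $\mathbf h\in\mathrm{Null}(\mathbf A)$ and every coordinate set $\mathcal S\subset\{1,\dots,n\}$ with $|\mathcal S|\le k$, $$\Big(1+\frac{c}{\alpha}\Big)\|\mathbf h_{\mathcal S}\|_1\le \|\mathbf h_{\mathcal S^c}\|_1 .$$
   Context: Problem (P2) is $\min_{\mathbf x\in\mathbb R^n}\{\|\mathbf x\|_1+\frac{1}{2\alpha}\|\mathbf x\|_2^2:\ \mathbf A\mathbf x=\mathbf b\}$. A vector is $k$-sparse if it has at most $k$ nonzero entries. For a vector $\mathbf h$ and index set $\mathcal S$, $\mathbf h_{\mathcal S}$ denotes the restriction of $\mathbf h$ to the coordinates in $\mathcal S$, and $\mathcal S^c=\{1,\dots,n\}\setminus\mathcal S$. *)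

theory Defs
  imports "HOL-Analysis.Analysis"
begin

definition l1norm :: "real ^ 'n \<Rightarrow> real" where
  "l1norm x = (\<Sum>i\<in>UNIV. \<bar>x $ i\<bar>)"

definition l1norm_on :: "'n set \<Rightarrow> real ^ 'n \<Rightarrow> real" where
  "l1norm_on S h = (\<Sum>i\<in>S. \<bar>h $ i\<bar>)"

definition linfnorm :: "real ^ 'n \<Rightarrow> real" where
  "linfnorm x = Max ((\<lambda>i. \<bar>x $ i\<bar>) ` UNIV)"

definition ksparse :: "nat \<Rightarrow> real ^ 'n \<Rightarrow> bool" where
  "ksparse k x \<longleftrightarrow> card {i. x $ i \<noteq> 0} \<le> k"

definition P2obj :: "real \<Rightarrow> real ^ 'n \<Rightarrow> real" where
  "P2obj \<alpha> x = l1norm x + (1 / (2 * \<alpha>)) * (norm x)\<^sup>2"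

definition P2_unique_minimizer ::
  "real \<Rightarrow> real ^ 'n ^ 'm \<Rightarrow> real ^ 'm \<Rightarrow> real ^ 'n \<Rightarrow> bool" where
  "P2_unique_minimizer \<alpha> A b x \<longleftrightarrow>
     A *v x = b \<and> (\<forall>y. A *v y = b \<and> y \<noteq> x \<longrightarrow> P2obj \<alpha> x < P2obj \<alpha> y)"

end

theory Submission
  imports Defs
begin

(*
  Write F(x) = |x|_1 + |x|_2^2/(2 alpha) for the objective of (P2).  Since the
  quadratic term expands exactly, a feasible step x -> x + h changes F by
      F(x+h) - F(x) = L(x,h) + |h|_2^2/(2 alpha),
      L(x,h) = |x+h|_1 - |x|_1 + <x,h>/alpha,
  and L is a sum of independent coordinate terms.
  Sufficiency: if supp x is contained in S and |x|_inf <= c, every coordinate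
  term on S is at least -(1 + c/alpha)|h_i| and every term off S equals |h_i|,
  so the null space property makes L(x,h) >= 0 and the quadratic term makes
  the increase strict for h <> 0.
  Necessity: if h in Null(A) violates the inequality on S, the "worst" sparse
  vector x = -c sgn(h) on S (zero elsewhere) makes L(x,t h) exactly
  t (|h_{S^c}|_1 - (1 + c/alpha)|h_S|_1) < 0 for small t > 0, which beats the
  quadratic term t^2 |h|_2^2/(2 alpha); so x + t h is a better feasible point.
*)

lemma sum_UNIV_split: "sum (f :: 'a::finite \<Rightarrow> real) UNIV = sum f S + sum f (- S)"
  using sum.union_disjoint[of S "- S" f] by (simp add: Un_ac(3)[symmetric] Compl_partition)

lemma abs_le_linfnorm: "\<bar>x $ i\<bar> \<le> linfnorm x"
  unfolding linfnorm_def by (rule Max_ge) auto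

lemma linfnorm_eqI:
  assumes "\<And>i. \<bar>x $ i\<bar> \<le> c" and "\<bar>x $ j\<bar> = c"
  shows "linfnorm x = c"
  unfolding linfnorm_def using assms
  by (intro antisym Max.boundedI Max_ge_iff[THEN iffD2]) auto

lemma l1norm_on_nonneg: "0 \<le> l1norm_on S h"
  unfolding l1norm_on_def by (simp add: sum_nonneg)

lemma l1norm_on_pos_imp_nonzero:
  assumes "0 < l1norm_on S h"
  obtains j where "j \<in> S" and "h $ j \<noteq> 0"
proof -
  have "\<not> (\<forall>j\<in>S. h $ j = 0)"
  proof
    assume "\<forall>j\<in>S. h $ j = 0"
    then have "l1norm_on S h = 0" unfolding l1norm_on_def by simp
    then show False using assms by simp
  qed
  then show thesis using that by blast
qed

lemma l1norm_on_scaleR: "t \<ge> 0 \<Longrightarrow> l1norm_on S (t *\<^sub>R h) = t * l1norm_on S h"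
  unfolding l1norm_on_def by (simp add: abs_mult sum_distrib_left)

text \<open>The part of the increment F(x+h) - F(x) that is linear in the scale of h
  (the l1 change plus the cross term of the quadratic).\<close>
definition linear_increment :: "real \<Rightarrow> real ^ 'n \<Rightarrow> real ^ 'n \<Rightarrow> real" where
  "linear_increment \<alpha> x h = l1norm (x + h) - l1norm x + inner x h / \<alpha>"

lemma P2obj_increment:
  assumes "\<alpha> > 0"
  shows "P2obj \<alpha> (x + h) - P2obj \<alpha> x = linear_increment \<alpha> x h + (norm h)\<^sup>2 / (2 * \<alpha>)"
proof -
  have "(norm (x + h))\<^sup>2 = (norm x)\<^sup>2 + 2 * inner x h + (norm h)\<^sup>2"
    by (simp add: power2_norm_eq_inner inner_add inner_commute)
  then show ?thesis
    using assms unfolding P2obj_def linear_increment_def by (simp add: field_simps)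
qed

lemma linear_increment_coordinates:
  "linear_increment \<alpha> x h = (\<Sum>i\<in>UNIV. \<bar>x $ i + h $ i\<bar> - \<bar>x $ i\<bar> + x $ i * h $ i / \<alpha>)"
  unfolding linear_increment_def l1norm_def inner_vec_def
  by (simp add: sum.distrib sum_subtractf sum_divide_distrib)

text \<open>Lower bound for vectors supported in S with sup-norm at most c: the
  coordinates in S lose at most (1 + c/alpha)|h_i|, the others gain |h_i|.\<close>
lemma linear_increment_lower_bound:
  assumes "\<alpha> > 0" and bound: "\<And>i. \<bar>x $ i\<bar> \<le> c" and supp: "\<And>i. i \<notin> S \<Longrightarrow> x $ i = 0"
  shows "l1norm_on (- S) h - (1 + c / \<alpha>) * l1norm_on S h \<le> linear_increment \<alpha> x h"
proof -
  define \<phi> where "\<phi> i = \<bar>x $ i + h $ i\<bar> - \<bar>x $ i\<bar> + x $ i * h $ i / \<alpha>" for i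
  have on_S: "- ((1 + c / \<alpha>) * \<bar>h $ i\<bar>) \<le> \<phi> i" for i
  proof -
    have "\<bar>x $ i * h $ i\<bar> \<le> c * \<bar>h $ i\<bar>"
      unfolding abs_mult by (rule mult_right_mono[OF bound]) simp
    then have "- (c / \<alpha> * \<bar>h $ i\<bar>) \<le> x $ i * h $ i / \<alpha>"
      using assms(1) by (simp add: field_simps abs_le_iff)
    moreover have "- \<bar>h $ i\<bar> \<le> \<bar>x $ i + h $ i\<bar> - \<bar>x $ i\<bar>" by linarith
    ultimately show ?thesis unfolding \<phi>_def by (simp add: algebra_simps)
  qed
  have off_S: "\<phi> i = \<bar>h $ i\<bar>" if "i \<notin> S" for i
    unfolding \<phi>_def using supp[OF that] by simp
  have "- ((1 + c / \<alpha>) * l1norm_on S h) \<le> sum \<phi> S"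
    unfolding l1norm_on_def sum_distrib_left sum_negf[symmetric] by (rule sum_mono) (rule on_S)
  moreover have "sum \<phi> (- S) = l1norm_on (- S) h"
    unfolding l1norm_on_def by (rule sum.cong) (simp_all add: off_S)
  ultimately show ?thesis
    using sum_UNIV_split[of \<phi> S] unfolding linear_increment_coordinates \<phi>_def by simp
qed

text \<open>The extremal sparse vector for a direction h: magnitude c on S with sign
  opposite to h, so that moving along h reduces every entry on S.\<close>
definition sign_vector :: "real \<Rightarrow> 'n set \<Rightarrow> real ^ 'n \<Rightarrow> real ^ 'n" where
  "sign_vector c S h = (\<chi> i. if i \<in> S then - c * sgn (h $ i) else 0)"

text \<open>For the extremal vector the lower bound above is attained, as long as the
  step does not cross zero in any coordinate.\<close>
lemma linear_increment_sign_vector: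
  assumes "\<alpha> > 0" and small: "\<And>i. \<bar>h $ i\<bar> \<le> c"
  shows "linear_increment \<alpha> (sign_vector c S h) h
           = l1norm_on (- S) h - (1 + c / \<alpha>) * l1norm_on S h"
proof -
  define x where "x = sign_vector c S h"
  define \<phi> where "\<phi> i = \<bar>x $ i + h $ i\<bar> - \<bar>x $ i\<bar> + x $ i * h $ i / \<alpha>" for i
  have on_S: "\<phi> i = - ((1 + c / \<alpha>) * \<bar>h $ i\<bar>)" if "i \<in> S" for i
  proof (cases "h $ i > 0")
    case True
    then show ?thesis
      using that small[of i] assms(1) unfolding \<phi>_def x_def sign_vector_def
      by (simp add: field_simps)
  next
    case False
    then show ?thesis
      using that small[of i] assms(1) unfolding \<phi>_def x_def sign_vector_def
      by (cases "h $ i = 0") (simp_all add: field_simps sgn_if)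
  qed
  have off_S: "\<phi> i = \<bar>h $ i\<bar>" if "i \<notin> S" for i
    unfolding \<phi>_def x_def sign_vector_def using that by simp
  have "sum \<phi> S = - ((1 + c / \<alpha>) * l1norm_on S h)"
    unfolding l1norm_on_def sum_distrib_left sum_negf[symmetric] by (rule sum.cong) (simp_all add: on_S)
  moreover have "sum \<phi> (- S) = l1norm_on (- S) h"
    unfolding l1norm_on_def by (rule sum.cong) (simp_all add: off_S)
  ultimately show ?thesis
    using sum_UNIV_split[of \<phi> S] unfolding x_def linear_increment_coordinates \<phi>_def by simp
qed

lemma sign_vector_scaleR: "t > 0 \<Longrightarrow> sign_vector c S (t *\<^sub>R h) = sign_vector c S h"
  by (simp add: vec_eq_iff sign_vector_def sgn_mult)

lemma ksparse_sign_vector: "card S \<le> k \<Longrightarrow> ksparse k (sign_vector c S h)"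
  unfolding ksparse_def sign_vector_def
  by (rule order_trans[OF card_mono]) auto

lemma linfnorm_sign_vector:
  assumes "c > 0" and "j \<in> S" and "h $ j \<noteq> 0"
  shows "linfnorm (sign_vector c S h) = c"
  using assms unfolding sign_vector_def
  by (intro linfnorm_eqI[where j = j]) (auto simp: abs_mult sgn_if)

lemma null_space_property_imp_unique_minimizer:
  fixes A :: "real ^ 'n ^ 'm"
  assumes "\<alpha> > 0"
    and nsp: "\<And>h. A *v h = 0 \<Longrightarrow> (1 + c / \<alpha>) * l1norm_on S h \<le> l1norm_on (- S) h"
    and bound: "\<And>i. \<bar>x $ i\<bar> \<le> c" and supp: "\<And>i. i \<notin> S \<Longrightarrow> x $ i = 0"
  shows "P2_unique_minimizer \<alpha> A (A *v x) x"
  unfolding P2_unique_minimizer_def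
proof (intro conjI refl allI impI)
  fix y assume y: "A *v y = A *v x \<and> y \<noteq> x"
  define h where "h = y - x"
  have "A *v h = 0" using y unfolding h_def by (simp add: matrix_vector_mult_diff_distrib)
  then have "(1 + c / \<alpha>) * l1norm_on S h \<le> l1norm_on (- S) h" by (rule nsp)
  moreover have "l1norm_on (- S) h - (1 + c / \<alpha>) * l1norm_on S h \<le> linear_increment \<alpha> x h"
    using assms(1) bound supp by (rule linear_increment_lower_bound)
  ultimately have linear: "0 \<le> linear_increment \<alpha> x h" by linarith
  have "h \<noteq> 0" using y unfolding h_def by simp
  then have "0 < (norm h)\<^sup>2 / (2 * \<alpha>)" using assms(1) by simp
  with linear have "0 < P2obj \<alpha> (x + h) - P2obj \<alpha> x"
    unfolding P2obj_increment[OF assms(1)] by simp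
  then show "P2obj \<alpha> x < P2obj \<alpha> y" unfolding h_def by simp
qed

lemma small_step:
  fixes h :: "real ^ 'n"
  assumes "c > 0" and "\<alpha> > 0" and "D > 0"
  obtains t where "t > 0" and "\<And>i. t * \<bar>h $ i\<bar> \<le> c" and "t * (norm h)\<^sup>2 < 2 * \<alpha> * D"
proof
  define t where "t = min (c / (norm h + 1)) (\<alpha> * D / ((norm h)\<^sup>2 + 1))"
  show "t > 0" unfolding t_def using assms by (simp add: add_nonneg_pos)
  show "t * \<bar>h $ i\<bar> \<le> c" for i
  proof -
    have "t * \<bar>h $ i\<bar> \<le> c / (norm h + 1) * norm h"
      unfolding t_def using assms by (intro mult_mono) (auto simp: component_le_norm_cart)
    also have "\<dots> \<le> c"
      using assms norm_ge_zero[of h] by (simp add: divide_le_eq not_less add_increasing)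
    finally show ?thesis .
  qed
  have "t * (norm h)\<^sup>2 \<le> \<alpha> * D / ((norm h)\<^sup>2 + 1) * (norm h)\<^sup>2"
    unfolding t_def using assms by (intro mult_right_mono) auto
  also have "\<dots> = \<alpha> * D * ((norm h)\<^sup>2 / ((norm h)\<^sup>2 + 1))" by simp
  also have "\<dots> < \<alpha> * D * 2"
    using assms by (intro mult_strict_left_mono) (simp_all add: divide_less_eq add_nonneg_pos)
  finally show "t * (norm h)\<^sup>2 < 2 * \<alpha> * D" by simp
qed

lemma sign_vector_descent:
  assumes "\<alpha> > 0" and "t > 0" and step: "\<And>i. t * \<bar>h $ i\<bar> \<le> c"
    and cost: "t * (norm h)\<^sup>2 < 2 * \<alpha> * ((1 + c / \<alpha>) * l1norm_on S h - l1norm_on (- S) h)"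
  shows "P2obj \<alpha> (sign_vector c S h + t *\<^sub>R h) < P2obj \<alpha> (sign_vector c S h)"
proof -
  define x where "x = sign_vector c S h"
  define D where "D = (1 + c / \<alpha>) * l1norm_on S h - l1norm_on (- S) h"
  have "\<bar>(t *\<^sub>R h) $ i\<bar> \<le> c" for i using assms(2) step[of i] by (simp add: abs_mult)
  from linear_increment_sign_vector[OF assms(1) this, where S = S]
  have "linear_increment \<alpha> x (t *\<^sub>R h) = - t * D"
    unfolding x_def D_def sign_vector_scaleR[OF assms(2)] l1norm_on_scaleR[OF less_imp_le[OF assms(2)]]
    by (simp add: algebra_simps)
  then have "P2obj \<alpha> (x + t *\<^sub>R h) - P2obj \<alpha> x = t * (t * (norm h)\<^sup>2 - 2 * \<alpha> * D) / (2 * \<alpha>)"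
    unfolding P2obj_increment[OF assms(1)] using assms(1,2)
    by (simp add: field_simps power2_eq_square)
  also have "\<dots> < 0"
    using assms(1,2) cost unfolding D_def by (intro divide_neg_pos mult_pos_neg) auto
  finally show ?thesis unfolding x_def by simp
qed

lemma violated_null_space_property_imp_failure:
  fixes A :: "real ^ 'n ^ 'm"
  assumes "\<alpha> > 0" and "c > 0" and "A *v h = 0"
    and violated: "l1norm_on (- S) h < (1 + c / \<alpha>) * l1norm_on S h"
  shows "linfnorm (sign_vector c S h) = c"
    and "\<not> P2_unique_minimizer \<alpha> A (A *v sign_vector c S h) (sign_vector c S h)"
proof -
  define x where "x = sign_vector c S h"
  have "0 < (1 + c / \<alpha>) * l1norm_on S h"
    using violated l1norm_on_nonneg[of "- S" h] by linarith
  then have "0 < l1norm_on S h"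
    using assms(1,2) l1norm_on_nonneg[of S h] by (simp add: zero_less_mult_iff)
  then obtain j where j: "j \<in> S" "h $ j \<noteq> 0" by (rule l1norm_on_pos_imp_nonzero)
  then show "linfnorm (sign_vector c S h) = c" by (rule linfnorm_sign_vector[OF assms(2)])
  have "0 < (1 + c / \<alpha>) * l1norm_on S h - l1norm_on (- S) h" using violated by simp
  then obtain t where t: "t > 0" "\<And>i. t * \<bar>h $ i\<bar> \<le> c"
      "t * (norm h)\<^sup>2 < 2 * \<alpha> * ((1 + c / \<alpha>) * l1norm_on S h - l1norm_on (- S) h)"
    using small_step[OF assms(2,1)] by blast
  have "x + t *\<^sub>R h \<noteq> x" using j t(1) by auto
  moreover have "A *v (x + t *\<^sub>R h) = A *v x"
    using assms(3) by (simp add: matrix_vector_right_distrib matrix_vector_mult_scaleR)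
  moreover have "P2obj \<alpha> (x + t *\<^sub>R h) < P2obj \<alpha> x"
    unfolding x_def using sign_vector_descent[OF assms(1) t] .
  ultimately show "\<not> P2_unique_minimizer \<alpha> A (A *v sign_vector c S h) (sign_vector c S h)"
    unfolding P2_unique_minimizer_def x_def by fastforce
qed

theorem mainTheorem1:
  fixes A :: "real ^ 'n ^ 'm" and k :: nat and \<alpha> c :: real
  assumes "k \<ge> 1" and "\<alpha> > 0" and "c > 0"
  shows "(\<forall>x0 :: real ^ 'n. ksparse k x0 \<and> linfnorm x0 = c \<longrightarrow>
            P2_unique_minimizer \<alpha> A (A *v x0) x0)
     \<longleftrightarrow> (\<forall>h S. A *v h = 0 \<and> card S \<le> k \<longrightarrow>
            (1 + c / \<alpha>) * l1norm_on S h \<le> l1norm_on (- S) h)"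
proof (intro iffI allI impI)
  fix h and S :: "'n set"
  assume recovery: "\<forall>x0. ksparse k x0 \<and> linfnorm x0 = c \<longrightarrow> P2_unique_minimizer \<alpha> A (A *v x0) x0"
    and hS: "A *v h = 0 \<and> card S \<le> k"
  show "(1 + c / \<alpha>) * l1norm_on S h \<le> l1norm_on (- S) h"
  proof (rule ccontr)
    assume "\<not> ?thesis"
    then have "l1norm_on (- S) h < (1 + c / \<alpha>) * l1norm_on S h" by simp
    from violated_null_space_property_imp_failure[OF assms(2,3) _ this] hS
    have "linfnorm (sign_vector c S h) = c"
      and "\<not> P2_unique_minimizer \<alpha> A (A *v sign_vector c S h) (sign_vector c S h)"
      by auto
    moreover have "ksparse k (sign_vector c S h)" using hS by (simp add: ksparse_sign_vector)
    ultimately show False using recovery by auto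
  qed
next
  fix x0 :: "real ^ 'n"
  assume nsp: "\<forall>h S. A *v h = 0 \<and> card S \<le> k \<longrightarrow> (1 + c / \<alpha>) * l1norm_on S h \<le> l1norm_on (- S) h"
    and x0: "ksparse k x0 \<and> linfnorm x0 = c"
  define S where "S = {i. x0 $ i \<noteq> 0}"
  have "card S \<le> k" using x0 unfolding S_def ksparse_def by simp
  then show "P2_unique_minimizer \<alpha> A (A *v x0) x0"
    using nsp x0 abs_le_linfnorm[of x0] unfolding S_def
    by (intro null_space_property_imp_unique_minimizer[OF assms(2)]) auto
qed

end
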